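(* Consider the following two-player Bayesian contest. Fix real $a\neq0$, $b>0$, $c>0$. Each player's private cost type is drawn independently from a common distribution $F$ with support $[\alpha,\beta]\subset(0,c)$ and nondegenerate variance. Let $M_1=E[\theta]$, $M_2=E[\theta^2]$, $\Delta=c-M_1$, $\sigma_\theta^2=M_2-M_1^2>0$, $\kappa=b/a$, $\omega=\sigma_\theta^2/a^2$, $\zeta=\frac{b^2-a\Delta}{a^2}$. In the affine relaxation, actions are arbitrary real numbers and a type-$\theta$ player who chooses $\tilde x\in\mathbb R$ against an opponent using strategy $x(\cdot)$ receives interim utility $\int_\alpha^\beta\bigl[P(\tilde x,x(\theta_y))-\theta\tilde x\bigr]\,dF(\theta_y)$, where $P(x,y)=\tfrac12+(x-y)\bigl(c-b(x+y)+axy\bigr)$ (no truncation). Then the affine relaxation has a unique symmetric Bayesian Nash equilibrium; it is affine and strictly decreasing in type, and expected effort equals $$E[x]=\kappa-\frac{\operatorname{sgn}(a)}{\sqrt2}\sqrt{\zeta+\sqrt{\zeta^2+\omega}}.$$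
   Context: A symmetric Bayesian Nash equilibrium is a strategy $x:[\alpha,\beta]\to\mathbb R$ (with finite first and second moments under $F$) such that, when the opponent uses $x(\cdot)$, $x(\theta)$ maximizes interim utility for every type $\theta$. *)

theory Defs
  imports "HOL-Probability.Probability"
begin

definition contest_P :: "real \<Rightarrow> real \<Rightarrow> real \<Rightarrow> real \<Rightarrow> real \<Rightarrow> real" where
  "contest_P a b c x y = 1/2 + (x - y) * (c - b * (x + y) + a * x * y)"

definition measure_support :: "real measure \<Rightarrow> real set" where
  "measure_support F = {t. \<forall>e>0. measure F (ball t e) > 0}"

definition interim_utility ::
  "real \<Rightarrow> real \<Rightarrow> real \<Rightarrow> real measure \<Rightarrow> (real \<Rightarrow> real) \<Rightarrow> real \<Rightarrow> real \<Rightarrow> real" where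
  "interim_utility a b c F x \<theta> xt = (\<integral>\<theta>y. (contest_P a b c xt (x \<theta>y) - \<theta> * xt) \<partial>F)"

definition symmetric_BNE ::
  "real \<Rightarrow> real \<Rightarrow> real \<Rightarrow> real measure \<Rightarrow> real \<Rightarrow> real \<Rightarrow> (real \<Rightarrow> real) \<Rightarrow> bool" where
  "symmetric_BNE a b c F \<alpha> \<beta> x \<longleftrightarrow>
     integrable F x \<and> integrable F (\<lambda>t. (x t)^2) \<and>
     (\<forall>\<theta>\<in>{\<alpha>..\<beta>}. \<forall>xt::real.
        interim_utility a b c F x \<theta> xt \<le> interim_utility a b c F x \<theta> (x \<theta>))"

end

theory Submission
  imports Defs
begin

(* Against an opponent strategy y with moments m1 = E y and m2 = E y^2, the interim utility of
   type theta is a quadratic in the own action z with leading coefficient a m1 - b and linear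
   coefficient c - a m2 - theta. Being a best reply for two distinct types forces
   u = b - a m1 > 0 and y theta = (c - a m2 - theta) / (2u), so every equilibrium is affine with
   slope -1/(2u) and its variance is sigma^2/(4u^2). Asking the moments of this line to reproduce
   m1 and m2 leaves a single equation, u^4 - (b^2 - a Delta) u^2 - a^2 sigma^2/4 = 0, whose unique
   positive root u = |a| sqrt ((zeta + sqrt (zeta^2 + omega)) / 2) gives existence, uniqueness
   and E x = (b - u) / a. *)

lemma quadratic_maximum_iff:
  fixes A B C z\<^sub>0 :: real
  shows "(\<forall>z. A * z^2 + B * z + C \<le> A * z\<^sub>0^2 + B * z\<^sub>0 + C) \<longleftrightarrow> A \<le> 0 \<and> 2 * A * z\<^sub>0 + B = 0"
proof
  assume max: "\<forall>z. A * z^2 + B * z + C \<le> A * z\<^sub>0^2 + B * z\<^sub>0 + C"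
  define l where "l = 2 * A * z\<^sub>0 + B"
  have gain: "t * (A * t + l) \<le> 0" for t
    using max[rule_format, of "z\<^sub>0 + t"] unfolding l_def by (simp add: algebra_simps power2_eq_square)
  have "A \<le> 0" using gain[of 1] gain[of "-1"] by simp
  have "1 - A > 0" using \<open>A \<le> 0\<close> by simp
  then have "l / (1 - A) * (A * (l / (1 - A)) + l) = l^2 / (1 - A)^2"
    by (simp add: field_simps power2_eq_square)
  with gain[of "l / (1 - A)"] have "l^2 / (1 - A)^2 \<le> 0" by simp
  then have "l = 0" using \<open>A \<le> 0\<close> by (simp add: divide_le_0_iff)
  with \<open>A \<le> 0\<close> show "A \<le> 0 \<and> 2 * A * z\<^sub>0 + B = 0" unfolding l_def by simp
next
  assume "A \<le> 0 \<and> 2 * A * z\<^sub>0 + B = 0"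
  then have "A \<le> 0" and B: "B = - 2 * A * z\<^sub>0" by simp_all
  have "A * z^2 + B * z + C = A * z\<^sub>0^2 + B * z\<^sub>0 + C + A * (z - z\<^sub>0)^2" for z
    unfolding B by (simp add: algebra_simps power2_eq_square)
  moreover have "A * (z - z\<^sub>0)^2 \<le> 0" for z
    using \<open>A \<le> 0\<close> by (simp add: mult_nonpos_nonneg)
  ultimately show "\<forall>z. A * z^2 + B * z + C \<le> A * z\<^sub>0^2 + B * z\<^sub>0 + C"
    by (metis add_le_same_cancel1)
qed

lemma add_sqrt_square_add_pos:
  fixes \<zeta> \<omega> :: real
  assumes "\<omega> > 0"
  shows "\<zeta> + sqrt (\<zeta>^2 + \<omega>) > 0"
proof -
  have "sqrt (\<zeta>^2) < sqrt (\<zeta>^2 + \<omega>)" by (rule real_sqrt_less_mono) (use assms in simp)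
  then show ?thesis by simp
qed

lemma quadratic_positive_root_iff:
  fixes \<zeta> \<omega> v :: real
  assumes "\<omega> > 0" and "v > 0"
  shows "v^2 - \<zeta> * v - \<omega> / 4 = 0 \<longleftrightarrow> v = (\<zeta> + sqrt (\<zeta>^2 + \<omega>)) / 2"
proof -
  have "v^2 - \<zeta> * v - \<omega> / 4 = 0 \<longleftrightarrow> (2 * v - \<zeta>)^2 = \<zeta>^2 + \<omega>"
    by (auto simp: algebra_simps power2_eq_square)
  also have "\<dots> \<longleftrightarrow> 2 * v - \<zeta> = sqrt (\<zeta>^2 + \<omega>)"
  proof
    assume sq: "(2 * v - \<zeta>)^2 = \<zeta>^2 + \<omega>"
    have "2 * v - \<zeta> \<ge> 0"
    proof (rule ccontr)
      assume "\<not> 2 * v - \<zeta> \<ge> 0"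
      then have "v * (v - \<zeta>) < 0" using \<open>v > 0\<close> by (simp add: mult_pos_neg)
      moreover have "v * (v - \<zeta>) = \<omega> / 4" using sq by (simp add: algebra_simps power2_eq_square)
      ultimately show False using \<open>\<omega> > 0\<close> by simp
    qed
    with sq show "2 * v - \<zeta> = sqrt (\<zeta>^2 + \<omega>)" by (metis real_sqrt_unique)
  next
    assume "2 * v - \<zeta> = sqrt (\<zeta>^2 + \<omega>)"
    then show "(2 * v - \<zeta>)^2 = \<zeta>^2 + \<omega>" using \<open>\<omega> > 0\<close> by (simp add: add_nonneg_pos)
  qed
  also have "\<dots> \<longleftrightarrow> v = (\<zeta> + sqrt (\<zeta>^2 + \<omega>)) / 2" by auto
  finally show ?thesis .
qed

lemma biquadratic_positive_root_iff:
  fixes a \<zeta> \<omega> u :: real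
  assumes "a \<noteq> 0" and "\<omega> > 0" and "u > 0"
  shows "u^4 - a^2 * \<zeta> * u^2 - a^4 * \<omega> / 4 = 0 \<longleftrightarrow> u = \<bar>a\<bar> * sqrt ((\<zeta> + sqrt (\<zeta>^2 + \<omega>)) / 2)"
proof -
  define v where "v = u^2 / a^2"
  have u2: "u^2 = a^2 * v" using assms(1) unfolding v_def by simp
  have "v > 0" using assms unfolding v_def by simp
  have "u^4 - a^2 * \<zeta> * u^2 - a^4 * \<omega> / 4 = a^4 * (v^2 - \<zeta> * v - \<omega> / 4)"
  proof -
    have "u^4 - a^2 * \<zeta> * u^2 - a^4 * \<omega> / 4 = (u^2)^2 - a^2 * \<zeta> * u^2 - a^4 * \<omega> / 4"
      by (simp flip: power_mult)
    also have "\<dots> = a^4 * (v^2 - \<zeta> * v - \<omega> / 4)"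
      unfolding u2 by (simp add: algebra_simps power2_eq_square power4_eq_xxxx)
    finally show ?thesis .
  qed
  also have "\<dots> = 0 \<longleftrightarrow> v = (\<zeta> + sqrt (\<zeta>^2 + \<omega>)) / 2"
    using quadratic_positive_root_iff[OF assms(2) \<open>v > 0\<close>] assms(1) by simp
  also have "\<dots> \<longleftrightarrow> u = \<bar>a\<bar> * sqrt ((\<zeta> + sqrt (\<zeta>^2 + \<omega>)) / 2)"
  proof -
    have "u = \<bar>a\<bar> * sqrt v"
      using u2 \<open>v > 0\<close> \<open>u > 0\<close> by (metis abs_of_pos real_sqrt_abs real_sqrt_mult)
    then show ?thesis using assms(1) by auto
  qed
  finally show ?thesis .
qed

lemma equilibrium_quartic_positive_root:
  fixes a b \<Delta> \<sigma>2 u :: real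
  assumes "a \<noteq> 0" and "\<sigma>2 > 0"
  defines "\<zeta> \<equiv> (b^2 - a * \<Delta>) / a^2" and "\<omega> \<equiv> \<sigma>2 / a^2"
  defines "r \<equiv> \<bar>a\<bar> * sqrt ((\<zeta> + sqrt (\<zeta>^2 + \<omega>)) / 2)"
  shows "r > 0"
    and "u > 0 \<Longrightarrow> u^4 - (b^2 - a * \<Delta>) * u^2 - a^2 * \<sigma>2 / 4 = 0 \<longleftrightarrow> u = r"
proof -
  have "\<omega> > 0" using assms(1,2) unfolding \<omega>_def by simp
  then show "r > 0" using assms(1) add_sqrt_square_add_pos unfolding r_def by simp
  have "b^2 - a * \<Delta> = a^2 * \<zeta>" and "a^2 * \<sigma>2 = a^4 * \<omega>"
    using assms(1) unfolding \<zeta>_def \<omega>_def by (simp_all add: power4_eq_xxxx power2_eq_square)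
  then show "u^4 - (b^2 - a * \<Delta>) * u^2 - a^2 * \<sigma>2 / 4 = 0 \<longleftrightarrow> u = r" if "u > 0"
    using biquadratic_positive_root_iff[OF assms(1) \<open>\<omega> > 0\<close> that] unfolding r_def by simp
qed

lemma mean_fixed_point_iff_quartic:
  fixes a b \<Delta> \<sigma>2 u m\<^sub>1 m\<^sub>2 :: real
  assumes "a \<noteq> 0" and "u > 0" and m\<^sub>1: "a * m\<^sub>1 = b - u" and m\<^sub>2: "m\<^sub>2 = m\<^sub>1^2 + \<sigma>2 / (4 * u^2)"
  shows "2 * u * m\<^sub>1 = \<Delta> - a * m\<^sub>2 \<longleftrightarrow> u^4 - (b^2 - a * \<Delta>) * u^2 - a^2 * \<sigma>2 / 4 = 0"
proof -
  have "a * (\<Delta> - a * m\<^sub>2 - 2 * u * m\<^sub>1) * u^2 = (a * \<Delta> - (a * m\<^sub>1)^2 - 2 * u * (a * m\<^sub>1)) * u^2 - a^2 * \<sigma>2 / 4"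
    unfolding m\<^sub>2 using \<open>u > 0\<close> by (simp add: field_simps power2_eq_square)
  also have "\<dots> = u^4 - (b^2 - a * \<Delta>) * u^2 - a^2 * \<sigma>2 / 4"
    unfolding m\<^sub>1 by (simp add: power2_eq_square power4_eq_xxxx algebra_simps)
  finally have key: "a * (\<Delta> - a * m\<^sub>2 - 2 * u * m\<^sub>1) * u^2 = u^4 - (b^2 - a * \<Delta>) * u^2 - a^2 * \<sigma>2 / 4" .
  show ?thesis using assms(1,2) by (auto simp flip: key)
qed

lemma interim_utility_quadratic:
  fixes F :: "real measure"
  assumes "prob_space F" and "integrable F y" and "integrable F (\<lambda>t. (y t)^2)"
  shows "interim_utility a b c F y \<theta> z
    = (a * (\<integral>t. y t \<partial>F) - b) * z^2 + (c - a * (\<integral>t. (y t)^2 \<partial>F) - \<theta>) * z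
      + (1/2 - c * (\<integral>t. y t \<partial>F) + b * (\<integral>t. (y t)^2 \<partial>F))"
proof -
  interpret prob_space F by fact
  have "interim_utility a b c F y \<theta> z
    = (\<integral>t. (1/2 + c * z - b * z^2 - \<theta> * z) + ((a * z^2 - c) * y t + (b - a * z) * (y t)^2) \<partial>F)"
    unfolding interim_utility_def contest_P_def
    by (intro arg_cong[where f = "integral\<^sup>L F"] ext) (simp add: algebra_simps power2_eq_square)
  also have "\<dots> = (1/2 + c * z - b * z^2 - \<theta> * z) + ((a * z^2 - c) * (\<integral>t. y t \<partial>F) + (b - a * z) * (\<integral>t. (y t)^2 \<partial>F))"
    using assms by (simp add: prob_space)
  finally show ?thesis by (simp add: algebra_simps)
qed

lemma symmetric_BNE_iff:
  fixes F :: "real measure"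
  assumes "prob_space F"
  shows "symmetric_BNE a b c F \<alpha> \<beta> y \<longleftrightarrow> integrable F y \<and> integrable F (\<lambda>t. (y t)^2) \<and>
    (\<forall>\<theta>\<in>{\<alpha>..\<beta>}. 0 \<le> b - a * (\<integral>t. y t \<partial>F)
       \<and> 2 * (b - a * (\<integral>t. y t \<partial>F)) * y \<theta> = c - a * (\<integral>t. (y t)^2 \<partial>F) - \<theta>)"
proof -
  have "(\<forall>z. interim_utility a b c F y \<theta> z \<le> interim_utility a b c F y \<theta> (y \<theta>)) \<longleftrightarrow>
      0 \<le> b - a * (\<integral>t. y t \<partial>F) \<and> 2 * (b - a * (\<integral>t. y t \<partial>F)) * y \<theta> = c - a * (\<integral>t. (y t)^2 \<partial>F) - \<theta>"
    if "integrable F y" and "integrable F (\<lambda>t. (y t)^2)" for \<theta>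
    unfolding interim_utility_quadratic[OF assms that] quadratic_maximum_iff by (auto simp: algebra_simps)
  then show ?thesis unfolding symmetric_BNE_def by blast
qed

lemma AE_in_measure_support:
  fixes F :: "real measure"
  assumes "finite_measure F" and "sets F = sets borel"
  shows "AE t in F. t \<in> measure_support F"
proof -
  interpret finite_measure F by fact
  define \<B> where "\<B> = {ball t e | t e. e > 0 \<and> measure F (ball t e) = 0}"
  obtain \<B>' where "\<B>' \<subseteq> \<B>" and "countable \<B>'" and "\<Union>\<B>' = \<Union>\<B>"
    using Lindelof[of \<B>] unfolding \<B>_def by auto
  have "N \<in> null_sets F" if "N \<in> \<B>'" for N
    using that \<open>\<B>' \<subseteq> \<B>\<close> assms(2) unfolding \<B>_def by (auto simp: null_sets_def emeasure_eq_measure)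
  then have "\<Union>\<B> \<in> null_sets F"
    using null_sets_UN'[OF \<open>countable \<B>'\<close>, of "\<lambda>N. N"] \<open>\<Union>\<B>' = \<Union>\<B>\<close> by simp
  moreover have "t \<in> \<Union>\<B>" if t: "t \<notin> measure_support F" for t
  proof -
    obtain e where "e > 0" and "\<not> measure F (ball t e) > 0"
      using t unfolding measure_support_def by auto
    then have "measure F (ball t e) = 0" using measure_nonneg[of F "ball t e"] by linarith
    with \<open>e > 0\<close> show ?thesis unfolding \<B>_def by (blast intro: centre_in_ball[THEN iffD2])
  qed
  ultimately show ?thesis by (auto intro: AE_I')
qed

locale type_distribution = prob_space F for F :: "real measure" +
  fixes \<alpha> \<beta> :: real
  assumes sets_F: "sets F = sets borel"
    and AE_types: "AE \<theta> in F. \<theta> \<in> {\<alpha>..\<beta>}"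
begin

abbreviation type_mean :: real where
  "type_mean \<equiv> \<integral>\<theta>. \<theta> \<partial>F"

abbreviation type_variance :: real where
  "type_variance \<equiv> (\<integral>\<theta>. \<theta>^2 \<partial>F) - type_mean^2"

lemma borel_measurable_F: "borel_measurable F = borel_measurable borel"
  by (rule measurable_cong_sets[OF sets_F refl])

lemma integrable_continuous:
  fixes f :: "real \<Rightarrow> real"
  assumes "continuous_on UNIV f"
  shows "integrable F f"
proof -
  obtain B where B: "\<forall>\<theta>\<in>{\<alpha>..\<beta>}. norm (f \<theta>) \<le> B"
    using compact_imp_bounded[OF compact_continuous_image[OF continuous_on_subset[OF assms] compact_Icc]]
    unfolding bounded_iff by blast
  show ?thesis
  proof (rule integrable_const_bound)
    show "AE \<theta> in F. norm (f \<theta>) \<le> B" using AE_types by eventually_elim (use B in auto)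
    show "f \<in> borel_measurable F"
      unfolding borel_measurable_F by (rule borel_measurable_continuous_onI[OF assms])
  qed
qed

lemma AE_affine_moments:
  assumes "y \<in> borel_measurable F" and "AE \<theta> in F. y \<theta> = p + q * \<theta>"
  shows "integrable F y" and "integrable F (\<lambda>\<theta>. (y \<theta>)^2)"
    and "(\<integral>\<theta>. y \<theta> \<partial>F) = p + q * type_mean"
    and "(\<integral>\<theta>. (y \<theta>)^2 \<partial>F) = (\<integral>\<theta>. y \<theta> \<partial>F)^2 + q^2 * type_variance"
proof -
  have int: "integrable F (\<lambda>\<theta>. \<theta>)" "integrable F (\<lambda>\<theta>. \<theta>^2)"
    by (auto intro!: integrable_continuous continuous_intros)
  have meas: "(\<lambda>\<theta>. p + q * \<theta>) \<in> borel_measurable F" "(\<lambda>\<theta>. (p + q * \<theta>)^2) \<in> borel_measurable F"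
    unfolding borel_measurable_F by auto
  have AE2: "AE \<theta> in F. (y \<theta>)^2 = (p + q * \<theta>)^2" using assms(2) by eventually_elim simp
  have meas2: "(\<lambda>\<theta>. (y \<theta>)^2) \<in> borel_measurable F" using assms(1) by measurable
  have sq: "(p + q * \<theta>)^2 = p^2 + (2 * p * q * \<theta> + q^2 * \<theta>^2)" for \<theta>
    by (simp add: power2_eq_square algebra_simps)
  show "integrable F y"
    using integrable_cong_AE[OF assms(1) meas(1) assms(2)] int by simp
  show "integrable F (\<lambda>\<theta>. (y \<theta>)^2)"
    using integrable_cong_AE[OF meas2 meas(2) AE2] int unfolding sq by simp
  have mean: "(\<integral>\<theta>. y \<theta> \<partial>F) = p + q * type_mean"
    using integral_cong_AE[OF assms(1) meas(1) assms(2)] int by (simp add: prob_space)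
  then show "(\<integral>\<theta>. y \<theta> \<partial>F) = p + q * type_mean" .
  have "(\<integral>\<theta>. (y \<theta>)^2 \<partial>F) = p^2 + 2 * p * q * type_mean + q^2 * (\<integral>\<theta>. \<theta>^2 \<partial>F)"
    using integral_cong_AE[OF meas2 meas(2) AE2] int unfolding sq by (simp add: prob_space)
  then show "(\<integral>\<theta>. (y \<theta>)^2 \<partial>F) = (\<integral>\<theta>. y \<theta> \<partial>F)^2 + q^2 * type_variance"
    unfolding mean by (simp add: power2_eq_square algebra_simps)
qed

lemma nondegenerate_types:
  assumes "type_variance > 0"
  shows "\<alpha> < \<beta>"
proof (rule ccontr)
  assume "\<not> \<alpha> < \<beta>"
  have AE: "AE \<theta> in F. \<theta> = \<alpha> + 0 * \<theta>" using AE_types by eventually_elim (use \<open>\<not> \<alpha> < \<beta>\<close> in auto)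
  have "type_variance = 0"
    using AE_affine_moments(4)[OF _ AE] by (simp add: borel_measurable_F)
  with assms show False by simp
qed

lemma symmetric_BNE_imp_quartic_root:
  assumes "a \<noteq> 0" and "\<alpha> < \<beta>" and "symmetric_BNE a b c F \<alpha> \<beta> y"
  defines "u \<equiv> b - a * (\<integral>\<theta>. y \<theta> \<partial>F)"
  shows "u > 0"
    and "u^4 - (b^2 - a * (c - type_mean)) * u^2 - a^2 * type_variance / 4 = 0"
    and "\<forall>\<theta>\<in>{\<alpha>..\<beta>}. y \<theta> = (\<integral>\<theta>. y \<theta> \<partial>F) + (type_mean - \<theta>) / (2 * u)"
proof -
  define m\<^sub>1 where "m\<^sub>1 = (\<integral>\<theta>. y \<theta> \<partial>F)"
  define m\<^sub>2 where "m\<^sub>2 = (\<integral>\<theta>. (y \<theta>)^2 \<partial>F)"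
  have "integrable F y" and reply: "\<And>\<theta>. \<theta> \<in> {\<alpha>..\<beta>} \<Longrightarrow> 0 \<le> u \<and> 2 * u * y \<theta> = c - a * m\<^sub>2 - \<theta>"
    using assms(3) unfolding symmetric_BNE_iff[OF prob_space_axioms] u_def m\<^sub>2_def by auto
  have "u \<noteq> 0"
  proof
    assume "u = 0"
    then have "c - a * m\<^sub>2 - \<alpha> = 0" and "c - a * m\<^sub>2 - \<beta> = 0" using reply[of \<alpha>] reply[of \<beta>] assms(2) by auto
    with assms(2) show False by simp
  qed
  with reply[of \<alpha>] assms(2) show "u > 0" by simp
  have y: "y \<theta> = (c - a * m\<^sub>2) / (2 * u) + (- 1 / (2 * u)) * \<theta>" if "\<theta> \<in> {\<alpha>..\<beta>}" for \<theta>
  proof -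
    have "y \<theta> = (c - a * m\<^sub>2 - \<theta>) / (2 * u)"
      using reply[OF that] \<open>u > 0\<close> by (simp add: eq_divide_eq mult.commute)
    then show ?thesis by (simp add: diff_divide_distrib)
  qed
  have "AE \<theta> in F. y \<theta> = (c - a * m\<^sub>2) / (2 * u) + (- 1 / (2 * u)) * \<theta>"
    using AE_types by eventually_elim (rule y)
  note moments = AE_affine_moments[OF borel_measurable_integrable[OF \<open>integrable F y\<close>] this]
  have m\<^sub>1: "m\<^sub>1 = (c - a * m\<^sub>2 - type_mean) / (2 * u)"
    using moments(3) unfolding m\<^sub>1_def by (simp add: diff_divide_distrib)
  have "2 * u * m\<^sub>1 = (c - type_mean) - a * m\<^sub>2" using \<open>u > 0\<close> unfolding m\<^sub>1 by simp
  moreover have "m\<^sub>2 = m\<^sub>1^2 + type_variance / (4 * u^2)"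
    using moments(4) unfolding m\<^sub>1_def m\<^sub>2_def by (simp add: power2_eq_square)
  moreover have "a * m\<^sub>1 = b - u" unfolding u_def m\<^sub>1_def by simp
  ultimately show "u^4 - (b^2 - a * (c - type_mean)) * u^2 - a^2 * type_variance / 4 = 0"
    using mean_fixed_point_iff_quartic[OF assms(1) \<open>u > 0\<close>] by blast
  show "\<forall>\<theta>\<in>{\<alpha>..\<beta>}. y \<theta> = (\<integral>\<theta>. y \<theta> \<partial>F) + (type_mean - \<theta>) / (2 * u)"
    using y \<open>u > 0\<close> unfolding m\<^sub>1_def[symmetric] m\<^sub>1 by (simp add: field_simps)
qed

lemma symmetric_BNE_of_quartic_root:
  assumes "a \<noteq> 0" and "u > 0"
    and "u^4 - (b^2 - a * (c - type_mean)) * u^2 - a^2 * type_variance / 4 = 0"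
  defines "x \<equiv> \<lambda>\<theta>. (b - u) / a + (type_mean - \<theta>) / (2 * u)"
  shows "symmetric_BNE a b c F \<alpha> \<beta> x" and "(\<integral>\<theta>. x \<theta> \<partial>F) = (b - u) / a"
proof -
  define m\<^sub>1 where "m\<^sub>1 = (b - u) / a"
  define m\<^sub>2 where "m\<^sub>2 = m\<^sub>1^2 + type_variance / (4 * u^2)"
  have x_affine: "x = (\<lambda>\<theta>. (m\<^sub>1 + type_mean / (2 * u)) + (- 1 / (2 * u)) * \<theta>)"
    unfolding x_def m\<^sub>1_def using \<open>u > 0\<close> by (simp add: fun_eq_iff field_simps)
  have meas: "x \<in> borel_measurable F" unfolding x_affine borel_measurable_F by simp
  have AE: "AE \<theta> in F. x \<theta> = (m\<^sub>1 + type_mean / (2 * u)) + (- 1 / (2 * u)) * \<theta>"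
    unfolding x_affine by simp
  note moments = AE_affine_moments[OF meas AE]
  have mean: "(\<integral>\<theta>. x \<theta> \<partial>F) = m\<^sub>1" using moments(3) \<open>u > 0\<close> by (simp add: field_simps)
  then show "(\<integral>\<theta>. x \<theta> \<partial>F) = (b - u) / a" unfolding m\<^sub>1_def .
  have square: "(\<integral>\<theta>. (x \<theta>)^2 \<partial>F) = m\<^sub>2"
    using moments(4) unfolding mean m\<^sub>2_def by (simp add: power2_eq_square)
  have "a * m\<^sub>1 = b - u" using assms(1) unfolding m\<^sub>1_def by simp
  then have "2 * u * m\<^sub>1 = (c - type_mean) - a * m\<^sub>2"
    using mean_fixed_point_iff_quartic[OF assms(1,2) _ m\<^sub>2_def] assms(3) by blast
  moreover have "2 * u * x \<theta> = 2 * u * m\<^sub>1 + (type_mean - \<theta>)" for \<theta>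
    unfolding x_def m\<^sub>1_def[symmetric] using \<open>u > 0\<close> by (simp add: field_simps)
  ultimately have "2 * u * x \<theta> = c - a * m\<^sub>2 - \<theta>" for \<theta> by simp
  moreover have "b - a * m\<^sub>1 = u" using \<open>a * m\<^sub>1 = b - u\<close> by simp
  ultimately show "symmetric_BNE a b c F \<alpha> \<beta> x"
    unfolding symmetric_BNE_iff[OF prob_space_axioms] mean square using moments(1,2) \<open>u > 0\<close> by simp
qed

end

theorem theorem3:
  fixes a b c \<alpha> \<beta> :: real and F :: "real measure"
  assumes "a \<noteq> 0" and "b > 0" and "c > 0"
    and "prob_space F" and "sets F = sets borel"
    and "measure_support F = {\<alpha>..\<beta>}"
    and "0 < \<alpha>" and "\<beta> < c"
    and "(\<integral>t. t^2 \<partial>F) - (\<integral>t. t \<partial>F)^2 > 0"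
  shows "\<exists>x. symmetric_BNE a b c F \<alpha> \<beta> x
           \<and> (\<forall>y. symmetric_BNE a b c F \<alpha> \<beta> y \<longrightarrow> (\<forall>\<theta>\<in>{\<alpha>..\<beta>}. y \<theta> = x \<theta>))
           \<and> (\<exists>p q. \<forall>\<theta>\<in>{\<alpha>..\<beta>}. x \<theta> = p + q * \<theta>)
           \<and> (\<forall>s t. \<alpha> \<le> s \<and> s < t \<and> t \<le> \<beta> \<longrightarrow> x t < x s)
           \<and> (let M1 = (\<integral>t. t \<partial>F); M2 = (\<integral>t. t^2 \<partial>F);
                  \<Delta> = c - M1; \<sigma>2 = M2 - M1^2;
                  \<kappa> = b / a; \<omega> = \<sigma>2 / a^2; \<zeta> = (b^2 - a * \<Delta>) / a^2
              in (\<integral>t. x t \<partial>F) = \<kappa> - sgn a / sqrt 2 * sqrt (\<zeta> + sqrt (\<zeta>^2 + \<omega>)))"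
proof -
  interpret prob_space F by fact
  interpret type_distribution F \<alpha> \<beta>
    using AE_in_measure_support[OF finite_measure_axioms assms(5)] assms(5,6) by unfold_locales auto
  define \<zeta> where "\<zeta> = (b^2 - a * (c - type_mean)) / a^2"
  define \<omega> where "\<omega> = type_variance / a^2"
  define u where "u = \<bar>a\<bar> * sqrt ((\<zeta> + sqrt (\<zeta>^2 + \<omega>)) / 2)"
  note root = equilibrium_quartic_positive_root[OF assms(1,9), where b = b and \<Delta> = "c - type_mean", folded \<zeta>_def \<omega>_def, folded u_def]
  define x where "x = (\<lambda>\<theta>. (b - u) / a + (type_mean - \<theta>) / (2 * u))"
  have BNE: "symmetric_BNE a b c F \<alpha> \<beta> x" and mean: "(\<integral>\<theta>. x \<theta> \<partial>F) = (b - u) / a"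
    using symmetric_BNE_of_quartic_root[OF assms(1) root(1)] root(2)[OF root(1)] unfolding x_def by simp_all
  have unique: "\<forall>\<theta>\<in>{\<alpha>..\<beta>}. y \<theta> = x \<theta>" if "symmetric_BNE a b c F \<alpha> \<beta> y" for y
  proof -
    have "\<alpha> < \<beta>" by (rule nondegenerate_types) (use assms(9) in simp)
    note y = symmetric_BNE_imp_quartic_root[OF assms(1) this that]
    have "b - a * (\<integral>\<theta>. y \<theta> \<partial>F) = u" using y(1,2) root(2) by blast
    moreover from this have "(\<integral>\<theta>. y \<theta> \<partial>F) = (b - u) / a" using assms(1) by (simp add: field_simps)
    ultimately show ?thesis using y(3) unfolding x_def by simp
  qed
  have "u / a = sgn a / sqrt 2 * sqrt (\<zeta> + sqrt (\<zeta>^2 + \<omega>))"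
    unfolding u_def using assms(1) by (cases "a > 0") (auto simp: sgn_if real_sqrt_divide)
  then have "(\<integral>\<theta>. x \<theta> \<partial>F) = b / a - sgn a / sqrt 2 * sqrt (\<zeta> + sqrt (\<zeta>^2 + \<omega>))"
    unfolding mean by (simp add: diff_divide_distrib)
  moreover have "x \<theta> = ((b - u) / a + type_mean / (2 * u)) + (- 1 / (2 * u)) * \<theta>" for \<theta>
    unfolding x_def by (simp add: diff_divide_distrib)
  moreover have "x t < x s" if "s < t" for s t
    unfolding x_def using that root(1) by (simp add: divide_strict_right_mono)
  ultimately show ?thesis
    using BNE unique unfolding Let_def \<zeta>_def \<omega>_def by blast
qed

end
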